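(* Let $b\in\mathbb{R}\setminus\{0\}$, $a_0>|b|$, $t\in\mathbb{R}$ and $a:=a_0-it$. Put $W_a(z):=\exp\big[-a|z|^2+\frac b2(z^2+\bar z^2)\big]$ for $z\in\mathbb{C}$ and $c_a:=\sqrt{(a^2-b^2)/(2b)}$. Then for all integers $k,l\ge0$, $$\int_{\mathbb{C}}H_l(c_az)H_k(c_a\bar z)W_a(z)\,dz=\delta_{lk}\,\frac{k!\,\pi\,(2a)^k}{\sqrt{a^2-b^2}\;b^k},$$ where $\sqrt{\cdot}$ denotes the principal branch and $dz$ is Lebesgue measure on $\mathbb{C}\cong\mathbb{R}^2$.
   Context: $H_k$ denotes the $k$-th (physicists') Hermite polynomial, $H_k(z)=\frac{k!}{2\pi i}\oint e^{-s^2+2zs}s^{-(k+1)}ds$ with a contour around the origin, i.e. the polynomials orthogonal on $\mathbb{R}$ w.r.t. $e^{-x^2}$ with leading coefficient $2^k$. (The branch chosen for $c_a$ does not affect the left-hand side for $k=l$, and the left-hand side vanishes for $k\neq l$ for either branch.) *)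

theory Defs
  imports "HOL-Analysis.Analysis"
begin

text \<open>This is the explicit coefficient formula obtained from the generating function
  exp(-s^2 + 2 z s) = sum_k H_k(z) s^k / k!, i.e. from the contour-integral definition.\<close>
definition hermite :: "nat \<Rightarrow> complex \<Rightarrow> complex" where
  "hermite k z = of_nat (fact k) *
     (\<Sum>m\<le>k div 2. (-1) ^ m * (2 * z) ^ (k - 2 * m) / (of_nat (fact m) * of_nat (fact (k - 2 * m))))"

definition W :: "complex \<Rightarrow> real \<Rightarrow> complex \<Rightarrow> complex" where
  "W a b z = exp (- a * of_real ((cmod z)\<^sup>2) + of_real b / 2 * (z\<^sup>2 + (cnj z)\<^sup>2))"

end

theory Submission
  imports Defs "HOL-Probability.Distributions" "HOL-Real_Asymp.Real_Asymp"
begin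

text \<open>Writing \<open>z = x + i y\<close>, the weight becomes \<open>exp (-(a - b) x\<^sup>2) exp (-(a + b) y\<^sup>2)\<close> with
  \<open>Re (a \<plusminus> b) > 0\<close>. Integrating by parts in \<open>x\<close> and in \<open>y\<close> and using the three-term
  recurrence \<open>H\<^sub>l\<^sub>+\<^sub>1(w) = 2 w H\<^sub>l(w) - 2 l H\<^sub>l\<^sub>-\<^sub>1(w)\<close>, the moments satisfy
  \<open>I(l + 1, k) = (2 a / b) k I(l, k - 1)\<close>, and the reflection \<open>y \<mapsto> -y\<close> gives \<open>I(l, k) = I(k, l)\<close>;
  hence \<open>I(l, k) = \<delta>\<^sub>l\<^sub>k k! (2 a / b)\<^sup>k I(0, 0)\<close>. The Gaussian \<open>I(0, 0)\<close> with complex parameters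
  is computed by substituting \<open>y = x s\<close> and integrating first in \<open>x\<close>, which leaves
  \<open>\<integral> ds / ((a - b) + (a + b) s\<^sup>2)\<close>; its primitive is a difference of complex logarithms.\<close>

lemma hermite_0 [simp]: "hermite 0 z = 1"
  by (simp add: hermite_def)

lemma hermite_1 [simp]: "hermite (Suc 0) z = 2 * z"
  by (simp add: hermite_def)

lemma hermite_at_0:
  "hermite k 0 = (if even k then (-1) ^ (k div 2) * of_nat (fact k) / of_nat (fact (k div 2)) else 0)"
proof -
  have "(\<Sum>m\<le>k div 2. (-1) ^ m * (2 * (0::complex)) ^ (k - 2 * m) / (of_nat (fact m) * of_nat (fact (k - 2 * m))))
      = (\<Sum>m\<le>k div 2. if m = k div 2 then (if even k then (-1) ^ m / of_nat (fact m) else 0) else 0)"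
    by (intro sum.cong refl) (auto simp: zero_power, presburger+)
  also have "\<dots> = (if even k then (-1) ^ (k div 2) / of_nat (fact (k div 2)) else 0)"
    by (subst sum.delta) auto
  finally show ?thesis by (simp add: hermite_def)
qed

lemma hermite_Suc_Suc_at_0: "hermite (Suc (Suc n)) 0 = - 2 * of_nat (Suc n) * hermite n 0"
proof (cases "even n")
  case True
  then obtain h where h: "n = 2 * h" by blast
  have "(of_nat (fact (Suc (Suc n))) :: complex) = of_nat (Suc (Suc n)) * of_nat (Suc n) * of_nat (fact n)"
       "(of_nat (fact (Suc h)) :: complex) = of_nat (Suc h) * of_nat (fact h)"
    by (simp_all only: fact_Suc of_nat_mult of_nat_id mult.assoc)
  moreover have "(of_nat (Suc (Suc n)) :: complex) = 2 * of_nat (Suc h)" using h by simp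
  moreover have "Suc (Suc n) div 2 = Suc h" "n div 2 = h" using h by auto
  ultimately show ?thesis using True unfolding hermite_at_0
    by (simp add: field_simps del: of_nat_Suc)
qed (simp add: hermite_at_0)

lemma has_field_derivative_hermite_Suc:
  "(hermite (Suc n) has_field_derivative 2 * of_nat (Suc n) * hermite n z) (at z)"
proof -
  define d where "d m = (-1) ^ m * (of_nat (Suc n - 2 * m) * (2 * (2 * z) ^ (Suc n - 2 * m - 1))) /
        (of_nat (fact m) * of_nat (fact (Suc n - 2 * m)) :: complex)" for m
  have D: "((\<lambda>z. \<Sum>m\<le>Suc n div 2. (-1) ^ m * (2 * z) ^ (Suc n - 2 * m) /
           (of_nat (fact m) * of_nat (fact (Suc n - 2 * m)))) has_field_derivative
         (\<Sum>m\<le>Suc n div 2. d m)) (at z)"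
    unfolding d_def by (intro DERIV_sum) (rule derivative_eq_intros refl | simp)+
  have summand: "of_nat (fact (Suc n)) * d m = 2 * of_nat (Suc n) * (of_nat (fact n) *
     ((-1) ^ m * (2 * z) ^ (n - 2 * m) / (of_nat (fact m) * of_nat (fact (n - 2 * m)))))"
    if "2 * m \<le> n" for m
  proof -
    define j where "j = n - 2 * m"
    have "Suc n - 2 * m = Suc j" using that j_def by simp
    moreover have "(of_nat (fact (Suc j)) :: complex) = of_nat (Suc j) * of_nat (fact j)"
      "(of_nat (fact (Suc n)) :: complex) = of_nat (Suc n) * of_nat (fact n)"
      by (simp_all only: fact_Suc of_nat_mult of_nat_id)
    moreover have "(of_nat (Suc j) :: complex) \<noteq> 0" "(of_nat (fact j) :: complex) \<noteq> 0"
      "(of_nat (fact m) :: complex) \<noteq> 0" by (simp_all del: of_nat_Suc)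
    ultimately show ?thesis unfolding d_def j_def[symmetric]
      by (simp add: field_simps del: of_nat_Suc)
  qed
  have "of_nat (fact (Suc n)) * (\<Sum>m\<le>Suc n div 2. d m) = 2 * of_nat (Suc n) * hermite n z"
  proof (cases "even n")
    case True
    then have "Suc n div 2 = n div 2" by presburger
    then show ?thesis unfolding hermite_def sum_distrib_left
      by (intro sum.cong refl) (use summand in \<open>auto simp: mult.assoc\<close>)
  next
    case False
    then have "Suc n div 2 = Suc (n div 2)" by presburger
    moreover have "d (Suc (n div 2)) = 0" using False unfolding d_def
      by (subgoal_tac "Suc n - 2 * Suc (n div 2) = 0") (simp, presburger)
    ultimately show ?thesis unfolding hermite_def sum_distrib_left
      by (simp, intro sum.cong refl) (use summand in \<open>auto simp: mult.assoc\<close>)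
  qed
  then show ?thesis unfolding hermite_def[of "Suc n"] using DERIV_cmult[OF D, of "of_nat (fact (Suc n))"]
    by simp
qed

lemma has_field_derivative_hermite:
  "(hermite n has_field_derivative 2 * of_nat n * hermite (n - 1) z) (at z)"
proof (cases n)
  case 0
  have "hermite 0 = (\<lambda>_. 1)" by (rule ext) simp
  then show ?thesis using 0 by simp
qed (use has_field_derivative_hermite_Suc in simp)

lemmas has_field_derivative_hermite_chain [derivative_intros] =
  has_field_derivative_hermite[THEN DERIV_chain2]

lemma continuous_on_hermite [continuous_intros]:
  "continuous_on S f \<Longrightarrow> continuous_on S (\<lambda>x. hermite n (f x))"
  unfolding hermite_def by (intro continuous_intros) auto

text \<open>Both sides of the three-term recurrence have the same derivative (inductively) and
  agree at \<open>0\<close>.\<close>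

lemma hermite_Suc_Suc:
  "hermite (Suc (Suc n)) z = 2 * z * hermite (Suc n) z - 2 * of_nat (Suc n) * hermite n z"
proof -
  define D where "D n z = hermite (Suc (Suc n)) z - 2 * z * hermite (Suc n) z + 2 * of_nat (Suc n) * hermite n z"
    for n z
  have D': "(D n has_field_derivative 2 * of_nat (Suc n) * D (n - 1) z) (at z)" if "n > 0" for n z
  proof -
    have "(D n has_field_derivative 2 * of_nat (Suc (Suc n)) * hermite (Suc n) z
              - (2 * hermite (Suc n) z + 2 * z * (2 * of_nat (Suc n) * hermite n z))
             + 2 * of_nat (Suc n) * (2 * of_nat n * hermite (n - 1) z)) (at z)"
      unfolding D_def by (auto intro!: derivative_eq_intros)
    then show ?thesis using that unfolding D_def by (cases n) (simp_all add: algebra_simps)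
  qed
  have D_eq_0: "D n z = 0" if D'_0: "\<And>w. (D n has_field_derivative 0) (at w)" for n z
  proof -
    obtain c where "\<forall>w\<in>UNIV. D n w = c"
      using has_field_derivative_zero_constant[of UNIV "D n"] D'_0 by (auto intro: has_field_derivative_at_within)
    moreover have "D n 0 = 0" unfolding D_def hermite_Suc_Suc_at_0 by (simp add: algebra_simps)
    ultimately show ?thesis by auto
  qed
  have "D n z = 0" for z
  proof (induction n arbitrary: z)
    case 0
    show ?case by (rule D_eq_0) (unfold D_def, auto intro!: derivative_eq_intros)
  next
    case (Suc m)
    show ?case by (rule D_eq_0) (use D'[of "Suc m"] Suc in simp)
  qed
  then show ?thesis unfolding D_def by (simp add: algebra_simps)
qed

lemma hermite_Suc: "hermite (Suc n) z = 2 * z * hermite n z - 2 * of_nat n * hermite (n - 1) z"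
  by (cases n) (simp_all add: hermite_Suc_Suc)

lemma norm_hermite_le: "\<exists>K. \<forall>z. norm (hermite n z) \<le> K * (1 + norm z) ^ n"
proof -
  define K where "K = fact n * (\<Sum>m\<le>n div 2. 2 ^ n / (fact m * fact (n - 2 * m)) :: real)"
  have "norm (hermite n z) \<le> K * (1 + norm z) ^ n" for z
  proof -
    have "norm (hermite n z) = fact n * norm (\<Sum>m\<le>n div 2. (-1) ^ m * (2 * z) ^ (n - 2 * m) /
             (of_nat (fact m) * of_nat (fact (n - 2 * m)) :: complex))"
      unfolding hermite_def norm_mult by simp
    also have "\<dots> \<le> fact n * (\<Sum>m\<le>n div 2. norm ((-1) ^ m * (2 * z) ^ (n - 2 * m) /
             (of_nat (fact m) * of_nat (fact (n - 2 * m)) :: complex)))"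
      by (intro mult_left_mono norm_sum) auto
    also have "\<dots> \<le> fact n * (\<Sum>m\<le>n div 2. 2 ^ n / (fact m * fact (n - 2 * m)) * (1 + norm z) ^ n)"
    proof (intro mult_left_mono sum_mono)
      fix m
      have "norm ((2::complex) * z) ^ (n - 2 * m) \<le> (2 * (1 + norm z)) ^ (n - 2 * m)"
        by (intro power_mono) (auto simp: norm_mult)
      also have "\<dots> \<le> (2 * (1 + norm z)) ^ n"
        by (intro power_increasing) auto
      also have "\<dots> = 2 ^ n * (1 + norm z) ^ n" by (rule power_mult_distrib)
      finally show "norm ((-1) ^ m * (2 * z) ^ (n - 2 * m) / (of_nat (fact m) * of_nat (fact (n - 2 * m)) :: complex))
          \<le> 2 ^ n / (fact m * fact (n - 2 * m)) * (1 + norm z) ^ n"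
        by (simp add: norm_mult norm_divide norm_power divide_right_mono)
    qed auto
    finally show ?thesis unfolding K_def by (simp add: sum_distrib_right mult.assoc)
  qed
  then show ?thesis by blast
qed

lemma borel_measurable_lborel_continuous:
  "continuous_on UNIV f \<Longrightarrow> f \<in> borel_measurable lborel"
  by (simp add: borel_measurable_continuous_onI)

lemma integrable_abs_power_gaussian:
  assumes "p > 0"
  shows "integrable lborel (\<lambda>x::real. \<bar>x\<bar> ^ j * exp (- p * x\<^sup>2))"
proof -
  define \<sigma> where "\<sigma> = sqrt (1 / (2 * p))"
  have \<sigma>: "\<sigma> > 0" "\<sigma>\<^sup>2 = 1 / (2 * p)" using assms unfolding \<sigma>_def by simp_all
  have "(\<lambda>x. sqrt (2 * pi * \<sigma>\<^sup>2) * (normal_density 0 \<sigma> x * \<bar>x - 0\<bar> ^ j)) = (\<lambda>x. \<bar>x\<bar> ^ j * exp (- p * x\<^sup>2))"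
    using \<sigma> assms unfolding normal_density_def by (intro ext) (simp add: field_simps)
  moreover have "integrable lborel (\<lambda>x. sqrt (2 * pi * \<sigma>\<^sup>2) * (normal_density 0 \<sigma> x * \<bar>x - 0\<bar> ^ j))"
    using \<sigma> by (intro integrable_mult_right integrable_normal_moment_abs) auto
  ultimately show ?thesis by metis
qed

lemma integrable_poly_gaussian:
  assumes "p > 0"
  shows "integrable lborel (\<lambda>x::real. (1 + \<bar>x\<bar>) ^ N * exp (- p * x\<^sup>2))"
proof -
  have "(1 + \<bar>x\<bar>) ^ N * exp (- p * x\<^sup>2) = (\<Sum>j\<le>N. of_nat (N choose j) * (\<bar>x\<bar> ^ j * exp (- p * x\<^sup>2)))"
    for x :: real
    by (subst add.commute, subst binomial_ring) (simp add: sum_distrib_right mult.assoc)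
  moreover have "integrable lborel (\<lambda>x::real. \<Sum>j\<le>N. of_nat (N choose j) * (\<bar>x\<bar> ^ j * exp (- p * x\<^sup>2)))"
    using assms by (intro Bochner_Integration.integrable_sum integrable_mult_right integrable_abs_power_gaussian)
  ultimately show ?thesis by simp
qed

lemma norm_exp_gaussian: "norm (exp (- (\<gamma> * (complex_of_real x)\<^sup>2))) = exp (- Re \<gamma> * x\<^sup>2)"
  by (simp add: power2_eq_square)

lemma has_vector_derivative_exp_gaussian:
  "((\<lambda>x. exp (- (\<gamma> * (complex_of_real x)\<^sup>2))) has_vector_derivative
     - (2 * \<gamma> * complex_of_real x) * exp (- (\<gamma> * (complex_of_real x)\<^sup>2))) (at x)"
proof -
  have "((\<lambda>w. exp (- (\<gamma> * w\<^sup>2))) has_field_derivative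
     - (2 * \<gamma> * complex_of_real x) * exp (- (\<gamma> * (complex_of_real x)\<^sup>2))) (at (complex_of_real x))"
    by (auto intro!: derivative_eq_intros simp: algebra_simps)
  then show ?thesis by (rule has_vector_derivative_real_field)
qed

context
  fixes \<gamma> :: complex and g :: "real \<Rightarrow> complex" and C :: real and N :: nat
  assumes Re_pos: "Re \<gamma> > 0"
    and g_bound: "\<And>x. norm (g x) \<le> C * (1 + \<bar>x\<bar>) ^ N"
begin

lemma norm_gaussian_weighted_le:
  "norm (g x * exp (- (\<gamma> * (complex_of_real x)\<^sup>2))) \<le> C * ((1 + \<bar>x\<bar>) ^ N * exp (- Re \<gamma> * x\<^sup>2))"
proof -
  have "norm (g x * exp (- (\<gamma> * (complex_of_real x)\<^sup>2))) = norm (g x) * exp (- Re \<gamma> * x\<^sup>2)"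
    by (simp add: norm_mult norm_exp_gaussian)
  also have "\<dots> \<le> C * (1 + \<bar>x\<bar>) ^ N * exp (- Re \<gamma> * x\<^sup>2)"
    by (intro mult_right_mono g_bound) auto
  finally show ?thesis by (simp add: mult.assoc)
qed

lemma integrable_gaussian_weighted:
  assumes "continuous_on UNIV g"
  shows "integrable lborel (\<lambda>x. g x * exp (- (\<gamma> * (complex_of_real x)\<^sup>2)))"
proof (rule Bochner_Integration.integrable_bound)
  show "integrable lborel (\<lambda>x. C * ((1 + \<bar>x\<bar>) ^ N * exp (- Re \<gamma> * x\<^sup>2)))"
    using Re_pos by (intro integrable_mult_right integrable_poly_gaussian)
  show "(\<lambda>x. g x * exp (- (\<gamma> * (complex_of_real x)\<^sup>2))) \<in> borel_measurable lborel"
    using assms by (intro borel_measurable_lborel_continuous continuous_intros)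
  show "AE x in lborel. norm (g x * exp (- (\<gamma> * (complex_of_real x)\<^sup>2)))
          \<le> norm (C * ((1 + \<bar>x\<bar>) ^ N * exp (- Re \<gamma> * x\<^sup>2)))"
    by (intro AE_I2 order_trans[OF norm_gaussian_weighted_le]) simp
qed

lemma tendsto_gaussian_weighted:
  "((\<lambda>x. g x * exp (- (\<gamma> * (complex_of_real x)\<^sup>2))) \<longlongrightarrow> 0) at_top"
  "((\<lambda>x. g x * exp (- (\<gamma> * (complex_of_real x)\<^sup>2))) \<longlongrightarrow> 0) at_bot"
proof -
  have bound: "\<forall>\<^sub>F x in F. norm (g x * exp (- (\<gamma> * (complex_of_real x)\<^sup>2)))
                 \<le> C * ((1 + \<bar>x\<bar>) ^ N * exp (- Re \<gamma> * x\<^sup>2))" for F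
    by (intro always_eventually allI norm_gaussian_weighted_le)
  have "((\<lambda>x::real. C * ((1 + \<bar>x\<bar>) ^ N * exp (- Re \<gamma> * x\<^sup>2))) \<longlongrightarrow> 0) at_top"
       "((\<lambda>x::real. C * ((1 + \<bar>x\<bar>) ^ N * exp (- Re \<gamma> * x\<^sup>2))) \<longlongrightarrow> 0) at_bot"
    using Re_pos by real_asymp+
  then show "((\<lambda>x. g x * exp (- (\<gamma> * (complex_of_real x)\<^sup>2))) \<longlongrightarrow> 0) at_top"
    "((\<lambda>x. g x * exp (- (\<gamma> * (complex_of_real x)\<^sup>2))) \<longlongrightarrow> 0) at_bot"
    by (auto intro: Lim_null_comparison[OF bound])
qed

end

lemma gaussian_integration_by_parts:
  fixes \<gamma> :: complex and g g' :: "real \<Rightarrow> complex"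
  assumes Re_pos: "Re \<gamma> > 0"
    and g: "\<And>x. (g has_vector_derivative g' x) (at x)" and cont: "continuous_on UNIV g'"
    and g_bound: "\<And>x. norm (g x) \<le> C * (1 + \<bar>x\<bar>) ^ N"
    and g'_bound: "\<And>x. norm (g' x) \<le> C * (1 + \<bar>x\<bar>) ^ N"
  shows "integral\<^sup>L lborel (\<lambda>x. g' x * exp (- (\<gamma> * (complex_of_real x)\<^sup>2))) =
       2 * \<gamma> * integral\<^sup>L lborel (\<lambda>x. complex_of_real x * g x * exp (- (\<gamma> * (complex_of_real x)\<^sup>2)))"
proof -
  define E where "E x = exp (- (\<gamma> * (complex_of_real x)\<^sup>2))" for x
  have cont_g: "continuous_on UNIV g"
    using g by (intro continuous_at_imp_continuous_on ballI has_vector_derivative_continuous) auto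
  have C: "C \<ge> 0"
    using order_trans[OF norm_ge_zero g_bound[of 0]] by simp
  have xg_bound: "norm (complex_of_real x * g x) \<le> C * (1 + \<bar>x\<bar>) ^ Suc N" for x
    using mult_mono[OF _ g_bound[of x], of "\<bar>x\<bar>" "1 + \<bar>x\<bar>"] C by (simp add: norm_mult mult_ac)
  have int_g': "integrable lborel (\<lambda>x. g' x * E x)"
    unfolding E_def by (rule integrable_gaussian_weighted[OF Re_pos g'_bound cont])
  have int_xg: "integrable lborel (\<lambda>x. complex_of_real x * g x * E x)"
    unfolding E_def by (rule integrable_gaussian_weighted[OF Re_pos xg_bound]) (intro continuous_intros cont_g)
  define f where "f x = g' x * E x - 2 * \<gamma> * (complex_of_real x * g x * E x)" for x
  have "((\<lambda>x. g x * E x) has_vector_derivative f x) (at x)" for x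
  proof -
    have "((\<lambda>x. g x * E x) has_vector_derivative
            g x * (- (2 * \<gamma> * complex_of_real x) * E x) + g' x * E x) (at x)"
      unfolding E_def by (intro has_vector_derivative_mult g has_vector_derivative_exp_gaussian)
    then show ?thesis unfolding f_def by (simp add: algebra_simps)
  qed
  then have "(LBINT x=-\<infinity>..\<infinity>. f x) = 0 - 0"
    using int_g' int_xg tendsto_gaussian_weighted[OF Re_pos g_bound] cont cont_g
    by (intro interval_integral_FTC_integrable)
       (auto simp: f_def E_def set_integrable_def ereal_tendsto_simps
             intro!: continuous_intros simp: continuous_on_eq_continuous_at)
  then have "integral\<^sup>L lborel f = 0"
    by (simp add: interval_lebesgue_integral_def set_lebesgue_integral_def)
  then show ?thesis
    unfolding f_def E_def[symmetric] using int_g' int_xg by simp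
qed

definition poly_growth :: "(real \<Rightarrow> real \<Rightarrow> complex) \<Rightarrow> bool" where
  "poly_growth f \<longleftrightarrow> continuous_on UNIV (\<lambda>p. f (fst p) (snd p)) \<and>
     (\<exists>C N. \<forall>x y. norm (f x y) \<le> C * (1 + \<bar>x\<bar>) ^ N * (1 + \<bar>y\<bar>) ^ N)"

lemma poly_growthI:
  assumes "continuous_on UNIV (\<lambda>p. f (fst p) (snd p))"
    and "\<And>x y. norm (f x y) \<le> C * (1 + \<bar>x\<bar>) ^ N * (1 + \<bar>y\<bar>) ^ N"
  shows "poly_growth f"
  using assms unfolding poly_growth_def by blast

lemma poly_growth_common_boundE:
  assumes f: "poly_growth f" and g: "poly_growth g"
  obtains C N where "\<And>x y. norm (f x y) \<le> C * ((1 + \<bar>x\<bar>) ^ N * (1 + \<bar>y\<bar>) ^ N)"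
    and "\<And>x y. norm (g x y) \<le> C * ((1 + \<bar>x\<bar>) ^ N * (1 + \<bar>y\<bar>) ^ N)"
proof -
  obtain C1 N1 C2 N2 where
    CN1: "\<And>x y. norm (f x y) \<le> C1 * (1 + \<bar>x\<bar>) ^ N1 * (1 + \<bar>y\<bar>) ^ N1" and
    CN2: "\<And>x y. norm (g x y) \<le> C2 * (1 + \<bar>x\<bar>) ^ N2 * (1 + \<bar>y\<bar>) ^ N2"
    using f g unfolding poly_growth_def by blast
  define M where "M = max N1 N2"
  have weaken: "C * (1 + \<bar>x\<bar>) ^ N * (1 + \<bar>y\<bar>) ^ N \<le> (\<bar>C1\<bar> + \<bar>C2\<bar>) * ((1 + \<bar>x\<bar>) ^ M * (1 + \<bar>y\<bar>) ^ M)"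
    if "\<bar>C\<bar> \<le> \<bar>C1\<bar> + \<bar>C2\<bar>" "N \<le> M" for C N and x y :: real
  proof -
    have "C * (1 + \<bar>x\<bar>) ^ N * (1 + \<bar>y\<bar>) ^ N \<le> \<bar>C\<bar> * ((1 + \<bar>x\<bar>) ^ N * (1 + \<bar>y\<bar>) ^ N)"
      by (simp add: mult.assoc mult_right_mono)
    also have "\<dots> \<le> (\<bar>C1\<bar> + \<bar>C2\<bar>) * ((1 + \<bar>x\<bar>) ^ M * (1 + \<bar>y\<bar>) ^ M)"
      using that by (intro mult_mono power_increasing) auto
    finally show ?thesis .
  qed
  show ?thesis
    by (rule that[of "\<bar>C1\<bar> + \<bar>C2\<bar>" M]; rule order_trans[OF _ weaken])
       (use CN1 CN2 in \<open>auto simp: M_def\<close>)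
qed

lemma poly_growth_continuous: "poly_growth f \<Longrightarrow> continuous_on UNIV (\<lambda>p. f (fst p) (snd p))"
  unfolding poly_growth_def by blast

lemma poly_growth_continuous_fst: "poly_growth f \<Longrightarrow> continuous_on UNIV (\<lambda>x. f x y)"
  unfolding poly_growth_def
  by (auto intro!: continuous_on_compose2[of UNIV "\<lambda>p. f (fst p) (snd p)" UNIV "\<lambda>x. (x, y)", simplified]
      continuous_intros)

lemma poly_growth_add: "poly_growth f \<Longrightarrow> poly_growth g \<Longrightarrow> poly_growth (\<lambda>x y. f x y + g x y)"
proof -
  assume f: "poly_growth f" and g: "poly_growth g"
  obtain C N where CN: "\<And>x y. norm (f x y) \<le> C * ((1 + \<bar>x\<bar>) ^ N * (1 + \<bar>y\<bar>) ^ N)"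
    "\<And>x y. norm (g x y) \<le> C * ((1 + \<bar>x\<bar>) ^ N * (1 + \<bar>y\<bar>) ^ N)"
    by (rule poly_growth_common_boundE[OF f g]) blast
  have "norm (f x y + g x y) \<le> 2 * (C * ((1 + \<bar>x\<bar>) ^ N * (1 + \<bar>y\<bar>) ^ N))" for x y
    using norm_triangle_ineq[of "f x y" "g x y"] CN[of x y] by linarith
  then have "norm (f x y + g x y) \<le> (2 * C) * (1 + \<bar>x\<bar>) ^ N * (1 + \<bar>y\<bar>) ^ N" for x y
    by (simp add: mult.assoc)
  then show ?thesis
    using f g by (intro poly_growthI) (auto intro: continuous_intros poly_growth_continuous)
qed

lemma poly_growth_mult: "poly_growth f \<Longrightarrow> poly_growth g \<Longrightarrow> poly_growth (\<lambda>x y. f x y * g x y)"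
proof -
  assume f: "poly_growth f" and g: "poly_growth g"
  obtain C N where CN: "\<And>x y. norm (f x y) \<le> C * ((1 + \<bar>x\<bar>) ^ N * (1 + \<bar>y\<bar>) ^ N)"
    "\<And>x y. norm (g x y) \<le> C * ((1 + \<bar>x\<bar>) ^ N * (1 + \<bar>y\<bar>) ^ N)"
    by (rule poly_growth_common_boundE[OF f g]) blast
  have "norm (f x y * g x y) \<le> (C * C) * (1 + \<bar>x\<bar>) ^ (N + N) * (1 + \<bar>y\<bar>) ^ (N + N)" for x y
  proof -
    have "norm (f x y * g x y) \<le> (C * ((1 + \<bar>x\<bar>) ^ N * (1 + \<bar>y\<bar>) ^ N)) * (C * ((1 + \<bar>x\<bar>) ^ N * (1 + \<bar>y\<bar>) ^ N))"
      unfolding norm_mult using CN[of x y] by (intro mult_mono) (auto intro: order_trans[OF norm_ge_zero])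
    then show ?thesis by (simp add: power_add algebra_simps)
  qed
  then show ?thesis
    using f g by (intro poly_growthI) (auto intro: continuous_intros poly_growth_continuous)
qed

lemma poly_growth_const: "poly_growth (\<lambda>x y. c)"
  by (rule poly_growthI[where C = "norm c" and N = 0]) (auto intro: continuous_intros)

lemma poly_growth_cmult: "poly_growth f \<Longrightarrow> poly_growth (\<lambda>x y. c * f x y)"
  using poly_growth_mult[OF poly_growth_const] by blast

lemma poly_growth_diff: "poly_growth f \<Longrightarrow> poly_growth g \<Longrightarrow> poly_growth (\<lambda>x y. f x y - g x y)"
  using poly_growth_add[of f "\<lambda>x y. (-1) * g x y"] poly_growth_cmult[of g "-1"] by simp

lemma poly_growth_fst: "poly_growth (\<lambda>x y. complex_of_real x)"
  by (rule poly_growthI[where C = 1 and N = 1]) (auto intro: continuous_intros simp: algebra_simps)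

lemma poly_growth_snd: "poly_growth (\<lambda>x y. complex_of_real y)"
  by (rule poly_growthI[where C = 1 and N = 1]) (auto intro: continuous_intros simp: algebra_simps)

lemma poly_growth_swap: "poly_growth f \<Longrightarrow> poly_growth (\<lambda>x y. f y x)"
proof -
  assume f: "poly_growth f"
  then obtain C N where CN: "\<And>x y. norm (f x y) \<le> C * (1 + \<bar>x\<bar>) ^ N * (1 + \<bar>y\<bar>) ^ N"
    unfolding poly_growth_def by blast
  show ?thesis
  proof (rule poly_growthI)
    show "continuous_on UNIV (\<lambda>p. f (snd p) (fst p))"
      by (rule continuous_on_compose2[OF poly_growth_continuous[OF f], of _ "\<lambda>p. (snd p, fst p)", simplified])
         (intro continuous_intros)
    show "norm (f y x) \<le> C * (1 + \<bar>x\<bar>) ^ N * (1 + \<bar>y\<bar>) ^ N" for x y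
      using CN[of y x] by (simp add: mult_ac)
  qed
qed

lemma poly_growth_reflect: "poly_growth f \<Longrightarrow> poly_growth (\<lambda>x y. f x (- y))"
proof -
  assume f: "poly_growth f"
  then obtain C N where CN: "\<And>x y. norm (f x y) \<le> C * (1 + \<bar>x\<bar>) ^ N * (1 + \<bar>y\<bar>) ^ N"
    unfolding poly_growth_def by blast
  show ?thesis
  proof (rule poly_growthI)
    show "continuous_on UNIV (\<lambda>p. f (fst p) (- snd p))"
      by (rule continuous_on_compose2[OF poly_growth_continuous[OF f], of _ "\<lambda>p. (fst p, - snd p)", simplified])
         (intro continuous_intros)
    show "norm (f x (- y)) \<le> C * (1 + \<bar>x\<bar>) ^ N * (1 + \<bar>y\<bar>) ^ N" for x y
      using CN[of x "- y"] by simp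
  qed
qed

lemma poly_growth_hermite: "poly_growth (\<lambda>x y. hermite n (u * complex_of_real x + v * complex_of_real y))"
proof -
  obtain K where K: "\<And>z. norm (hermite n z) \<le> K * (1 + norm z) ^ n" using norm_hermite_le by blast
  have "norm (hermite n (u * complex_of_real x + v * complex_of_real y)) \<le>
        (\<bar>K\<bar> * (1 + norm u + norm v) ^ n) * (1 + \<bar>x\<bar>) ^ n * (1 + \<bar>y\<bar>) ^ n" for x y
  proof -
    have "norm (u * complex_of_real x + v * complex_of_real y) \<le> norm u * \<bar>x\<bar> + norm v * \<bar>y\<bar>"
      using norm_triangle_ineq[of "u * complex_of_real x" "v * complex_of_real y"] by (simp add: norm_mult)
    also have "\<dots> \<le> (1 + norm u + norm v) * (1 + \<bar>x\<bar>) * (1 + \<bar>y\<bar>) - 1"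
      by (simp add: algebra_simps add_increasing)
    finally have "1 + norm (u * complex_of_real x + v * complex_of_real y) \<le> (1 + norm u + norm v) * (1 + \<bar>x\<bar>) * (1 + \<bar>y\<bar>)"
      by simp
    then have "norm (hermite n (u * complex_of_real x + v * complex_of_real y)) \<le> \<bar>K\<bar> * ((1 + norm u + norm v) * (1 + \<bar>x\<bar>) * (1 + \<bar>y\<bar>)) ^ n"
      using K[of "u * complex_of_real x + v * complex_of_real y"]
      by (smt (verit, best) mult_right_mono mult_left_mono power_mono norm_ge_zero zero_le_power abs_ge_zero)
    then show ?thesis by (simp add: power_mult_distrib mult.assoc)
  qed
  then show ?thesis by (intro poly_growthI) (intro continuous_intros)
qed

definition gauss_weight :: "complex \<Rightarrow> complex \<Rightarrow> real \<Rightarrow> real \<Rightarrow> complex" where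
  "gauss_weight \<alpha> \<beta> x y = exp (- (\<alpha> * (complex_of_real x)\<^sup>2)) * exp (- (\<beta> * (complex_of_real y)\<^sup>2))"

definition gauss_integral :: "complex \<Rightarrow> complex \<Rightarrow> (real \<Rightarrow> real \<Rightarrow> complex) \<Rightarrow> complex" where
  "gauss_integral \<alpha> \<beta> f = (\<integral>(x, y). f x y * gauss_weight \<alpha> \<beta> x y \<partial>(lborel \<Otimes>\<^sub>M lborel))"

lemma continuous_gauss_weight: "continuous_on UNIV (\<lambda>p. gauss_weight \<alpha> \<beta> (fst p) (snd p))"
  unfolding gauss_weight_def by (intro continuous_intros)

lemma borel_measurable_gauss_weighted:
  assumes "continuous_on UNIV (\<lambda>p. f (fst p) (snd p))"
  shows "(\<lambda>(x, y). f x y * gauss_weight \<alpha> \<beta> x y) \<in> borel_measurable (lborel \<Otimes>\<^sub>M lborel)"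
proof -
  have "continuous_on UNIV (\<lambda>p. f (fst p) (snd p) * gauss_weight \<alpha> \<beta> (fst p) (snd p))"
    by (intro continuous_intros assms continuous_gauss_weight)
  then show ?thesis
    unfolding lborel_prod case_prod_beta' by (rule borel_measurable_lborel_continuous)
qed

lemma integrable_product_lborel:
  fixes f g :: "real \<Rightarrow> real"
  assumes f: "integrable lborel f" and g: "integrable lborel g"
  shows "integrable (lborel \<Otimes>\<^sub>M lborel) (\<lambda>(x, y). f x * g y)"
proof (rule lborel_pair.Fubini_integrable)
  have [measurable]: "f \<in> borel_measurable borel" "g \<in> borel_measurable borel"
    using f g borel_measurable_integrable by auto
  show "(\<lambda>(x, y). f x * g y) \<in> borel_measurable (lborel \<Otimes>\<^sub>M lborel)" by measurable
  have "integrable lborel (\<lambda>x. \<bar>f x\<bar> * (\<integral>y. \<bar>g y\<bar> \<partial>lborel))"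
    using f by (intro integrable_mult_left) auto
  then show "integrable lborel (\<lambda>x. \<integral>y. norm ((\<lambda>(x, y). f x * g y) (x, y)) \<partial>lborel)"
    by (simp add: abs_mult)
qed (use g in simp)

lemma integrable_gauss_weighted:
  assumes "Re \<alpha> > 0" "Re \<beta> > 0" "poly_growth f"
  shows "integrable (lborel \<Otimes>\<^sub>M lborel) (\<lambda>(x, y). f x y * gauss_weight \<alpha> \<beta> x y)"
proof -
  obtain C N where CN: "\<And>x y. norm (f x y) \<le> C * (1 + \<bar>x\<bar>) ^ N * (1 + \<bar>y\<bar>) ^ N"
    using assms(3) unfolding poly_growth_def by blast
  define G where "G x y = ((1 + \<bar>x\<bar>) ^ N * exp (- Re \<alpha> * x\<^sup>2)) * ((1 + \<bar>y\<bar>) ^ N * exp (- Re \<beta> * y\<^sup>2))"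
    for x y
  show ?thesis
  proof (rule Bochner_Integration.integrable_bound)
    have "integrable (lborel \<Otimes>\<^sub>M lborel) (\<lambda>(x, y). G x y)"
      unfolding G_def using assms(1,2) by (intro integrable_product_lborel integrable_poly_gaussian)
    from integrable_mult_right[OF this, of C]
    show "integrable (lborel \<Otimes>\<^sub>M lborel) (\<lambda>(x, y). C * G x y)"
      by (simp add: case_prod_beta')
    show "(\<lambda>(x, y). f x y * gauss_weight \<alpha> \<beta> x y) \<in> borel_measurable (lborel \<Otimes>\<^sub>M lborel)"
      using assms(3) by (intro borel_measurable_gauss_weighted poly_growth_continuous)
    have "norm (f x y * gauss_weight \<alpha> \<beta> x y) \<le> norm (C * G x y)" for x y
    proof -
      have "norm (f x y * gauss_weight \<alpha> \<beta> x y)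
              \<le> C * (1 + \<bar>x\<bar>) ^ N * (1 + \<bar>y\<bar>) ^ N * (exp (- Re \<alpha> * x\<^sup>2) * exp (- Re \<beta> * y\<^sup>2))"
        unfolding norm_mult gauss_weight_def norm_exp_gaussian by (intro mult_right_mono CN) auto
      also have "\<dots> \<le> norm (C * G x y)"
        by (simp add: G_def abs_mult algebra_simps)
      finally show ?thesis .
    qed
    then show "AE p in lborel \<Otimes>\<^sub>M lborel. norm ((\<lambda>(x, y). f x y * gauss_weight \<alpha> \<beta> x y) p)
                  \<le> norm ((\<lambda>(x, y). C * G x y) p)"
      by (intro AE_I2) (simp add: case_prod_beta')
  qed
qed

context
  fixes \<alpha> \<beta> :: complex
  assumes Re_pos: "Re \<alpha> > 0" "Re \<beta> > 0"
begin

lemma gauss_integral_add: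
  "poly_growth f \<Longrightarrow> poly_growth g \<Longrightarrow>
     gauss_integral \<alpha> \<beta> (\<lambda>x y. f x y + g x y) = gauss_integral \<alpha> \<beta> f + gauss_integral \<alpha> \<beta> g"
  unfolding gauss_integral_def
  using integrable_gauss_weighted[OF Re_pos, of f] integrable_gauss_weighted[OF Re_pos, of g]
  by (simp add: distrib_right case_prod_beta')

lemma gauss_integral_diff:
  "poly_growth f \<Longrightarrow> poly_growth g \<Longrightarrow>
     gauss_integral \<alpha> \<beta> (\<lambda>x y. f x y - g x y) = gauss_integral \<alpha> \<beta> f - gauss_integral \<alpha> \<beta> g"
  unfolding gauss_integral_def
  using integrable_gauss_weighted[OF Re_pos, of f] integrable_gauss_weighted[OF Re_pos, of g]
  by (simp add: left_diff_distrib case_prod_beta')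

end

lemma gauss_integral_cmult: "gauss_integral \<alpha> \<beta> (\<lambda>x y. u * f x y) = u * gauss_integral \<alpha> \<beta> f"
  unfolding gauss_integral_def by (simp add: mult.assoc case_prod_beta')

lemma gauss_integral_swap:
  assumes "poly_growth f"
  shows "gauss_integral \<beta> \<alpha> (\<lambda>x y. f y x) = gauss_integral \<alpha> \<beta> f"
proof -
  have "gauss_weight \<beta> \<alpha> y x = gauss_weight \<alpha> \<beta> x y" for x y
    unfolding gauss_weight_def by simp
  then show ?thesis
    unfolding gauss_integral_def
    using lborel_pair.integral_product_swap[OF borel_measurable_gauss_weighted[OF poly_growth_continuous[OF assms]]]
    by simp
qed

context
  fixes \<alpha> \<beta> :: complex
  assumes Re_pos: "Re \<alpha> > 0" "Re \<beta> > 0"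
begin

lemma gauss_integral_iterated:
  "poly_growth f \<Longrightarrow> gauss_integral \<alpha> \<beta> f = (\<integral>x. (\<integral>y. f x y * gauss_weight \<alpha> \<beta> x y \<partial>lborel) \<partial>lborel)"
  unfolding gauss_integral_def
  using lborel_pair.integral_fst[OF integrable_gauss_weighted[OF Re_pos]] by simp

lemma gauss_integral_iterated':
  "poly_growth f \<Longrightarrow> gauss_integral \<alpha> \<beta> f = (\<integral>y. (\<integral>x. f x y * gauss_weight \<alpha> \<beta> x y \<partial>lborel) \<partial>lborel)"
  unfolding gauss_integral_def
  using lborel_pair.integral_snd[OF integrable_gauss_weighted[OF Re_pos]] by simp

lemma gauss_integral_reflect:
  assumes "poly_growth f"
  shows "gauss_integral \<alpha> \<beta> (\<lambda>x y. f x (- y)) = gauss_integral \<alpha> \<beta> f"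
proof -
  have "(\<integral>y. f x (- y) * gauss_weight \<alpha> \<beta> x y \<partial>lborel) = (\<integral>y. f x y * gauss_weight \<alpha> \<beta> x y \<partial>lborel)" for x
    by (subst (2) lborel_integral_real_affine[where c = "-1" and t = 0]) (simp_all add: gauss_weight_def)
  then show ?thesis
    using assms by (simp add: gauss_integral_iterated poly_growth_reflect)
qed

lemma gauss_integral_by_parts_fst:
  assumes f: "poly_growth f" and f': "poly_growth f'"
    and deriv: "\<And>x y. ((\<lambda>x. f x y) has_vector_derivative f' x y) (at x)"
  shows "gauss_integral \<alpha> \<beta> f' = 2 * \<alpha> * gauss_integral \<alpha> \<beta> (\<lambda>x y. complex_of_real x * f x y)"
proof -
  obtain C N where CN: "\<And>x y. norm (f x y) \<le> C * ((1 + \<bar>x\<bar>) ^ N * (1 + \<bar>y\<bar>) ^ N)"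
    "\<And>x y. norm (f' x y) \<le> C * ((1 + \<bar>x\<bar>) ^ N * (1 + \<bar>y\<bar>) ^ N)"
    by (rule poly_growth_common_boundE[OF f f']) blast
  define e\<beta> where "e\<beta> y = exp (- (\<beta> * (complex_of_real y)\<^sup>2))" for y
  have factor: "(\<integral>x. h x * gauss_weight \<alpha> \<beta> x y \<partial>lborel) = (\<integral>x. h x * exp (- (\<alpha> * (complex_of_real x)\<^sup>2)) \<partial>lborel) * e\<beta> y"
    for h y
    unfolding integral_mult_left_zero[symmetric] by (simp add: gauss_weight_def e\<beta>_def mult.assoc)
  have "(\<integral>x. f' x y * gauss_weight \<alpha> \<beta> x y \<partial>lborel)
          = 2 * \<alpha> * (\<integral>x. complex_of_real x * f x y * gauss_weight \<alpha> \<beta> x y \<partial>lborel)" for y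
  proof -
    have "norm (f x y) \<le> (C * (1 + \<bar>y\<bar>) ^ N) * (1 + \<bar>x\<bar>) ^ N"
      "norm (f' x y) \<le> (C * (1 + \<bar>y\<bar>) ^ N) * (1 + \<bar>x\<bar>) ^ N" for x
      using CN[of x y] by (simp_all add: mult_ac)
    from gaussian_integration_by_parts[OF Re_pos(1) deriv poly_growth_continuous_fst[OF f'] this]
    show ?thesis unfolding factor by (simp add: mult.assoc)
  qed
  then show ?thesis
    unfolding gauss_integral_iterated'[OF f'] gauss_integral_iterated'[OF poly_growth_mult[OF poly_growth_fst f]]
    by (simp add: mult.assoc)
qed

end

lemma gauss_integral_by_parts_snd:
  assumes Re_pos: "Re \<alpha> > 0" "Re \<beta> > 0"
    and f: "poly_growth f" and f': "poly_growth f'"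
    and deriv: "\<And>x y. ((\<lambda>y. f x y) has_vector_derivative f' x y) (at y)"
  shows "gauss_integral \<alpha> \<beta> f' = 2 * \<beta> * gauss_integral \<alpha> \<beta> (\<lambda>x y. complex_of_real y * f x y)"
proof -
  have "gauss_integral \<alpha> \<beta> f' = gauss_integral \<beta> \<alpha> (\<lambda>x y. f' y x)"
    using gauss_integral_swap[OF f'] by simp
  also have "\<dots> = 2 * \<beta> * gauss_integral \<beta> \<alpha> (\<lambda>x y. complex_of_real x * f y x)"
    using gauss_integral_by_parts_fst[OF Re_pos(2,1) poly_growth_swap[OF f] poly_growth_swap[OF f'] deriv] .
  also have "gauss_integral \<beta> \<alpha> (\<lambda>x y. complex_of_real x * f y x)
               = gauss_integral \<alpha> \<beta> (\<lambda>x y. complex_of_real y * f x y)"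
    using gauss_integral_swap[OF poly_growth_mult[OF poly_growth_snd f]] by simp
  finally show ?thesis .
qed

lemma tendsto_exp_gaussian:
  assumes "Re \<gamma> > 0"
  shows "((\<lambda>x. exp (- (\<gamma> * (complex_of_real x)\<^sup>2))) \<longlongrightarrow> 0) at_top"
    "((\<lambda>x. exp (- (\<gamma> * (complex_of_real x)\<^sup>2))) \<longlongrightarrow> 0) at_bot"
  using tendsto_gaussian_weighted[OF assms, of "\<lambda>_. 1" 1 0] by simp_all

lemma integral_abs_times_gaussian:
  assumes Re_pos: "Re \<gamma> > 0"
  shows "(\<integral>x. complex_of_real \<bar>x\<bar> * exp (- (\<gamma> * (complex_of_real x)\<^sup>2)) \<partial>lborel) = 1 / \<gamma>"
proof -
  define f where "f x = complex_of_real \<bar>x\<bar> * exp (- (\<gamma> * (complex_of_real x)\<^sup>2))" for x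
  define F where "F x = exp (- (\<gamma> * (complex_of_real x)\<^sup>2)) / (2 * \<gamma>)" for x
  have \<gamma>: "\<gamma> \<noteq> 0" using Re_pos by auto
  have int: "integrable lborel f"
    unfolding f_def using Re_pos
    by (intro integrable_gaussian_weighted[where C = 1 and N = 1]) (auto intro: continuous_intros)
  have cont: "isCont f x" "isCont F x" for x
    unfolding f_def F_def using \<gamma> by (intro continuous_intros, simp_all)+
  have F': "(F has_vector_derivative - complex_of_real x * exp (- (\<gamma> * (complex_of_real x)\<^sup>2))) (at x)" for x
  proof -
    have "(F has_vector_derivative - (2 * \<gamma> * complex_of_real x) * exp (- (\<gamma> * (complex_of_real x)\<^sup>2)) / (2 * \<gamma>)) (at x)"
      unfolding F_def by (intro has_vector_derivative_divide has_vector_derivative_exp_gaussian)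
    then show ?thesis using \<gamma> by simp
  qed
  have F'_neg: "(F has_vector_derivative f x) (at x)" if "x < 0" for x
    using F'[of x] that by (simp add: f_def)
  have F'_pos: "((\<lambda>x. - F x) has_vector_derivative f x) (at x)" if "x > 0" for x
    using has_vector_derivative_minus[OF F'[of x]] that by (simp add: f_def)
  have F_lim: "(F \<longlongrightarrow> 0) at_bot" "(F \<longlongrightarrow> 0) at_top"
    unfolding F_def
    using tendsto_divide_zero[OF tendsto_exp_gaussian(2)[OF Re_pos]]
      tendsto_divide_zero[OF tendsto_exp_gaussian(1)[OF Re_pos]] by auto
  have F_0: "(F \<longlongrightarrow> 1 / (2 * \<gamma>)) (at_left 0)" "(F \<longlongrightarrow> 1 / (2 * \<gamma>)) (at_right 0)"
    using cont(2)[of 0] unfolding isCont_def filterlim_at_split by (simp_all add: F_def)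
  have "(LBINT x=-\<infinity>..0. f x) = 1 / (2 * \<gamma>) - 0"
    using int cont F_lim(1) F_0(1)
    by (intro interval_integral_FTC_integrable[where F = F])
       (auto simp: set_integrable_def zero_ereal_def ereal_tendsto_simps intro!: integrable_mult_indicator
             intro: F'_neg)
  moreover have "(LBINT x=0..\<infinity>. f x) = 0 - (- 1 / (2 * \<gamma>))"
    using int cont tendsto_minus[OF F_lim(2)] F_0(2)
    by (intro interval_integral_FTC_integrable[where F = "\<lambda>x. - F x"])
       (auto simp: set_integrable_def zero_ereal_def ereal_tendsto_simps intro!: integrable_mult_indicator tendsto_minus
             intro: F'_pos)
  moreover have "(LBINT x=-\<infinity>..0. f x) + (LBINT x=0..\<infinity>. f x) = (LBINT x=-\<infinity>..\<infinity>. f x)"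
    by (rule interval_integral_sum) (use int in \<open>simp add: interval_lebesgue_integrable_def set_integrable_def\<close>)
  ultimately have "integral\<^sup>L lborel f = 1 / (2 * \<gamma>) + 1 / (2 * \<gamma>)"
    by (simp add: interval_lebesgue_integral_def set_lebesgue_integral_def)
  then show ?thesis
    unfolding f_def using \<gamma> by (simp add: field_simps)
qed

lemma Re_csqrt_gt_abs_Im:
  assumes "Re z > 0"
  shows "Re (csqrt z) > \<bar>Im (csqrt z)\<bar>"
proof -
  define w where "w = csqrt z"
  have "Re z = Re (w\<^sup>2)" by (simp add: w_def)
  also have "\<dots> = (Re w)\<^sup>2 - (Im w)\<^sup>2" by (simp add: power2_eq_square)
  finally have "Re z = (Re w)\<^sup>2 - (Im w)\<^sup>2" .
  then have "\<bar>Im w\<bar>\<^sup>2 < (Re w)\<^sup>2" using assms by simp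
  moreover have "Re w \<ge> 0" unfolding w_def by (rule Re_csqrt)
  ultimately show ?thesis unfolding w_def[symmetric] by (rule power_less_imp_less_base)
qed

lemma Re_quadratic_pos:
  assumes "Re \<alpha> > 0" "Re \<beta> > 0"
  shows "Re (\<alpha> + \<beta> * (complex_of_real s)\<^sup>2) > 0"
proof -
  have "Re (\<alpha> + \<beta> * (complex_of_real s)\<^sup>2) = Re \<alpha> + Re \<beta> * s\<^sup>2"
    by (simp add: power2_eq_square)
  then show ?thesis using assms by (simp add: add_pos_nonneg)
qed

lemma sector_add_imaginary_not_nonpos_Reals:
  assumes r: "Re r > \<bar>Im r\<bar>" and q: "Re q > \<bar>Im q\<bar>"
  shows "r + \<i> * q * complex_of_real s \<notin> \<real>\<^sub>\<le>\<^sub>0"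
proof
  assume "r + \<i> * q * complex_of_real s \<in> \<real>\<^sub>\<le>\<^sub>0"
  then have im: "Im r + Re q * s = 0" and re: "Re r - Im q * s \<le> 0"
    by (auto simp: complex_nonpos_Reals_iff)
  have "\<bar>Im r\<bar> * \<bar>Im q\<bar> < Re r * Re q"
    using r q by (intro mult_strict_mono) auto
  moreover have "- (Im q * Im r) \<le> \<bar>Im r\<bar> * \<bar>Im q\<bar>"
    by (metis abs_ge_minus_self abs_mult mult.commute)
  moreover have "Re q * (Re r - Im q * s) = Re r * Re q + Im q * Im r"
  proof -
    have e: "Re q * s = - Im r" using im by linarith
    have "Re q * (Re r - Im q * s) = Re r * Re q - Im q * (Re q * s)" by (simp add: algebra_simps)
    also have "\<dots> = Re r * Re q + Im q * Im r" unfolding e by simp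
    finally show ?thesis .
  qed
  moreover have "Re q * (Re r - Im q * s) \<le> 0"
    using re q by (simp add: mult_nonneg_nonpos)
  ultimately show False by linarith
qed

lemma Ln_ii_times_diff:
  assumes q: "Re q > 0"
  shows "Ln (\<i> * q) - Ln (- \<i> * q) = \<i> * of_real pi"
proof -
  have q0: "q \<noteq> 0" using q by auto
  with q have "\<bar>Im (Ln q)\<bar> < pi / 2" using Re_Ln_pos_lt by blast
  then have "Ln (- \<i> * q) = Ln (- \<i>) + Ln q"
    using q0 by (subst Ln_times) auto
  moreover have "Ln (\<i> * q) = Ln q + \<i> * of_real pi / 2"
    using q q0 by (simp add: Ln_times_ii)
  ultimately show ?thesis by simp
qed

lemma tendsto_Ln_diff:
  assumes r: "Re r > \<bar>Im r\<bar>" and q: "Re q > \<bar>Im q\<bar>"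
  shows "((\<lambda>s::real. Ln (r + \<i> * q * complex_of_real s) - Ln (r + \<i> * q * complex_of_real (- s))) \<longlongrightarrow> \<i> * of_real pi) at_top"
proof -
  have q0: "Re q > 0" using q by linarith
  have inz: "\<i> * q + r * complex_of_real (1 / s) \<noteq> 0" "- \<i> * q + r * complex_of_real (1 / s) \<noteq> 0" if "s > 0" for s
  proof -
    have "complex_of_real s * (\<i> * q + r * complex_of_real (1 / s)) = r + \<i> * q * complex_of_real s"
      using that by (simp add: algebra_simps)
    moreover have "r + \<i> * q * complex_of_real s \<noteq> 0" using sector_add_imaginary_not_nonpos_Reals[OF r q, of s] by auto
    ultimately show "\<i> * q + r * complex_of_real (1 / s) \<noteq> 0" by auto
    have "complex_of_real s * (- \<i> * q + r * complex_of_real (1 / s)) = r + \<i> * q * complex_of_real (- s)"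
      using that by (simp add: algebra_simps)
    moreover have "r + \<i> * q * complex_of_real (- s) \<noteq> 0" using sector_add_imaginary_not_nonpos_Reals[OF r q, of "-s"] by auto
    ultimately show "- \<i> * q + r * complex_of_real (1 / s) \<noteq> 0" by auto
  qed
  have ev: "\<forall>\<^sub>F s in at_top. Ln (\<i> * q + r * complex_of_real (1 / s)) - Ln (- \<i> * q + r * complex_of_real (1 / s)) =
         Ln (r + \<i> * q * complex_of_real s) - Ln (r + \<i> * q * complex_of_real (- s))"
  proof (rule eventually_mono[OF eventually_gt_at_top[of 0]])
    fix s :: real assume s: "s > 0"
    have 1: "r + \<i> * q * complex_of_real s = complex_of_real s * (\<i> * q + r * complex_of_real (1 / s))"
      using s by (simp add: algebra_simps)
    have 2: "r + \<i> * q * complex_of_real (- s) = complex_of_real s * (- \<i> * q + r * complex_of_real (1 / s))"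
      using s by (simp add: algebra_simps)
    show "Ln (\<i> * q + r * complex_of_real (1 / s)) - Ln (- \<i> * q + r * complex_of_real (1 / s)) =
         Ln (r + \<i> * q * complex_of_real s) - Ln (r + \<i> * q * complex_of_real (- s))"
      unfolding 1 2 using s inz[OF s] by (simp add: Ln_times_of_real)
  qed
  have t0: "((\<lambda>s::real. 1 / s) \<longlongrightarrow> 0) at_top" by real_asymp
  have n1: "\<i> * q \<notin> \<real>\<^sub>\<le>\<^sub>0" "- \<i> * q \<notin> \<real>\<^sub>\<le>\<^sub>0" using q0 by (auto simp: complex_nonpos_Reals_iff)
  have "((\<lambda>s. Ln (\<i> * q + r * complex_of_real (1 / s)) - Ln (- \<i> * q + r * complex_of_real (1 / s))) \<longlongrightarrow>
      Ln (\<i> * q + r * complex_of_real 0) - Ln (- \<i> * q + r * complex_of_real 0)) at_top"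
    by (intro tendsto_intros t0) (use n1 in auto)
  moreover have "Ln (\<i> * q + r * complex_of_real 0) - Ln (- \<i> * q + r * complex_of_real 0) = \<i> * of_real pi"
    using Ln_ii_times_diff[OF q0] by simp
  ultimately show ?thesis using Lim_transform_eventually[OF _ ev] by simp
qed

lemma has_field_derivative_inverse_quadratic_primitive:
  assumes r: "Re r > \<bar>Im r\<bar>" and q: "Re q > \<bar>Im q\<bar>"
  shows "((\<lambda>w. (Ln (r + \<i> * q * w) - Ln (r + \<i> * q * (- w))) / (2 * r * \<i> * q)) has_field_derivative
           1 / (r * r + q * q * (complex_of_real s)\<^sup>2)) (at (complex_of_real s))"
proof -
  define A B where "A = r + \<i> * q * complex_of_real s" and "B = r + \<i> * q * (- complex_of_real s)"
  have np: "r + \<i> * q * complex_of_real s \<notin> \<real>\<^sub>\<le>\<^sub>0" "r + \<i> * q * (- complex_of_real s) \<notin> \<real>\<^sub>\<le>\<^sub>0"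
    using sector_add_imaginary_not_nonpos_Reals[OF r q, of s]
      sector_add_imaginary_not_nonpos_Reals[OF r q, of "- s"] by simp_all
  then have AB: "A \<noteq> 0" "B \<noteq> 0" unfolding A_def B_def by auto
  have "A + B = 2 * r" "A * B = r * r + q * q * (complex_of_real s)\<^sup>2"
    by (simp_all add: A_def B_def algebra_simps power2_eq_square)
  moreover have "r \<noteq> 0" "q \<noteq> 0" using r q by auto
  moreover have "((\<lambda>w. Ln (r + \<i> * q * w)) has_field_derivative inverse A * (\<i> * q)) (at (complex_of_real s))"
    unfolding A_def by (rule derivative_eq_intros refl np(1) | simp)+
  moreover have "((\<lambda>w. Ln (r + \<i> * q * (- w))) has_field_derivative inverse B * (- (\<i> * q))) (at (complex_of_real s))"
    unfolding B_def by (rule derivative_eq_intros refl np(2) | simp)+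
  moreover have "inverse A * (\<i> * q) - inverse B * (- (\<i> * q)) = \<i> * q * (A + B) / (A * B)"
    using AB by (simp add: field_simps)
  ultimately show ?thesis
    by (auto intro!: DERIV_cdivide[where c = "2 * r * \<i> * q", THEN DERIV_cong] DERIV_diff)
qed

lemma integral_inverse_quadratic:
  fixes \<alpha> \<beta> :: complex
  assumes \<alpha>: "Re \<alpha> > 0" and \<beta>: "Re \<beta> > 0"
    and int: "integrable lborel (\<lambda>s. 1 / (\<alpha> + \<beta> * (complex_of_real s)\<^sup>2))"
  shows "integral\<^sup>L lborel (\<lambda>s. 1 / (\<alpha> + \<beta> * (complex_of_real s)\<^sup>2)) = of_real pi / (csqrt \<alpha> * csqrt \<beta>)"
proof -
  define r q where "r = csqrt \<alpha>" and "q = csqrt \<beta>"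
  have r: "Re r > \<bar>Im r\<bar>" and q: "Re q > \<bar>Im q\<bar>"
    unfolding r_def q_def by (intro Re_csqrt_gt_abs_Im \<alpha> \<beta>)+
  then have r0: "r \<noteq> 0" and q0: "q \<noteq> 0" by auto
  have rq: "\<alpha> = r * r" "\<beta> = q * q" unfolding r_def q_def by (simp_all flip: power2_eq_square)
  define f where "f = (\<lambda>s. 1 / (\<alpha> + \<beta> * (complex_of_real s)\<^sup>2))"
  define G where "G w = (Ln (r + \<i> * q * w) - Ln (r + \<i> * q * (- w))) / (2 * r * \<i> * q)" for w
  define L where "L = \<i> * of_real pi / (2 * r * \<i> * q)"
  have G': "((\<lambda>s. G (complex_of_real s)) has_vector_derivative f s) (at s)" for s
    unfolding G_def f_def rq
    by (rule has_vector_derivative_real_field[OF has_field_derivative_inverse_quadratic_primitive[OF r q]])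
  have lim_top: "((\<lambda>s. G (complex_of_real s)) \<longlongrightarrow> L) at_top"
    unfolding G_def L_def using tendsto_divide[OF tendsto_Ln_diff[OF r q] tendsto_const, of "2 * r * \<i> * q"] r0 q0
    by simp
  have "G (complex_of_real (- s)) = - G (complex_of_real s)" for s
    unfolding G_def minus_divide_left by simp
  then have lim_bot: "((\<lambda>s. G (complex_of_real s)) \<longlongrightarrow> - L) at_bot"
    using tendsto_minus[OF lim_top] by (simp add: filterlim_at_bot_mirror)
  have "\<alpha> + \<beta> * (complex_of_real s)\<^sup>2 \<noteq> 0" for s
    using Re_quadratic_pos[OF \<alpha> \<beta>, of s] by (metis less_irrefl zero_complex.sel(1))
  then have "isCont f s" for s
    unfolding f_def by (intro continuous_intros) auto
  then have "(LBINT s=-\<infinity>..\<infinity>. f s) = L - (- L)"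
    using int[folded f_def] lim_top lim_bot G'
    by (intro interval_integral_FTC_integrable)
       (auto simp: set_integrable_def ereal_tendsto_simps)
  then have "integral\<^sup>L lborel f = L - (- L)"
    by (simp add: interval_lebesgue_integral_def set_lebesgue_integral_def)
  also have "\<dots> = of_real pi / (r * q)"
    using r0 q0 by (simp add: L_def field_simps)
  finally show ?thesis unfolding f_def r_def q_def .
qed

lemma csqrt_mult_Re_pos:
  assumes "Re z > 0" "Re w > 0"
  shows "csqrt z * csqrt w = csqrt (z * w)"
proof -
  have "\<bar>Arg z\<bar> < pi / 2" "\<bar>Arg w\<bar> < pi / 2"
    using assms Re_Ln_pos_lt Arg_eq_Im_Ln by (metis less_irrefl zero_complex.sel(1))+
  then show ?thesis by (intro csqrt_mult[symmetric]) auto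
qed

lemma borel_measurable_gauss_weight [measurable]:
  "(\<lambda>(x, y). gauss_weight \<alpha> \<beta> x y) \<in> borel_measurable (lborel \<Otimes>\<^sub>M lborel)"
  using borel_measurable_gauss_weighted[of "\<lambda>x y. 1"] by (simp add: continuous_on_const)

lemma borel_measurable_gauss_weight_along_lines [measurable]:
  "(\<lambda>(x, s). complex_of_real \<bar>x\<bar> * gauss_weight \<alpha> \<beta> x (x * s)) \<in> borel_measurable (lborel \<Otimes>\<^sub>M lborel)"
proof -
  have "continuous_on UNIV (\<lambda>p. complex_of_real \<bar>fst p\<bar> * gauss_weight \<alpha> \<beta> (fst p) (fst p * snd p))"
    unfolding gauss_weight_def by (intro continuous_intros)
  then show ?thesis
    unfolding lborel_prod case_prod_beta' by (rule borel_measurable_lborel_continuous)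
qed

context
  fixes \<alpha> \<beta> :: complex
  assumes Re_pos: "Re \<alpha> > 0" "Re \<beta> > 0"
begin

lemma gauss_weight_along_line:
  "gauss_weight \<alpha> \<beta> x (x * s) = exp (- ((\<alpha> + \<beta> * (complex_of_real s)\<^sup>2) * (complex_of_real x)\<^sup>2))"
  unfolding gauss_weight_def by (simp add: algebra_simps power2_eq_square flip: exp_add)

lemma integrable_exp_gaussian: "integrable lborel (\<lambda>y. exp (- (\<gamma> * (complex_of_real y)\<^sup>2)))"
  if "Re \<gamma> > 0" for \<gamma>
  using integrable_gaussian_weighted[OF that, of "\<lambda>_. 1" 1 0] by simp

lemma integral_gauss_weight_substitute:
  assumes "x \<noteq> 0"
  shows "(\<integral>y. gauss_weight \<alpha> \<beta> x y \<partial>lborel) = (\<integral>s. complex_of_real \<bar>x\<bar> * gauss_weight \<alpha> \<beta> x (x * s) \<partial>lborel)"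
  using lborel_integral_real_affine[OF assms, of "\<lambda>y. gauss_weight \<alpha> \<beta> x y" 0]
  by (simp add: scaleR_conv_of_real)

lemma integral_gauss_weight_along_lines:
  "(\<integral>x. complex_of_real \<bar>x\<bar> * gauss_weight \<alpha> \<beta> x (x * s) \<partial>lborel) = 1 / (\<alpha> + \<beta> * (complex_of_real s)\<^sup>2)"
  unfolding gauss_weight_along_line by (rule integral_abs_times_gaussian[OF Re_quadratic_pos[OF Re_pos]])

lemma integrable_gauss_weight_along_lines:
  "integrable (lborel \<Otimes>\<^sub>M lborel) (\<lambda>(x, s). complex_of_real \<bar>x\<bar> * gauss_weight \<alpha> \<beta> x (x * s))"
proof (rule lborel_pair.Fubini_integrable)
  show "AE x in lborel. integrable lborel (\<lambda>s. (\<lambda>(x, s). complex_of_real \<bar>x\<bar> * gauss_weight \<alpha> \<beta> x (x * s)) (x, s))"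
    using AE_lborel_singleton[of 0]
  proof eventually_elim
    case (elim x)
    have "integrable lborel (\<lambda>s. gauss_weight \<alpha> \<beta> x (0 + x * s))"
      unfolding gauss_weight_def using elim integrable_exp_gaussian[OF Re_pos(2)]
      by (intro integrable_mult_right lborel_integrable_real_affine) auto
    then show ?case by simp
  qed
  define G where "G = (\<integral>y. exp (- Re \<beta> * y\<^sup>2) \<partial>lborel)"
  have int: "integrable lborel (\<lambda>x. (1 + \<bar>x\<bar>) ^ 0 * exp (- Re \<alpha> * x\<^sup>2) * G)"
    using Re_pos by (intro integrable_mult_left integrable_poly_gaussian)
  have ae: "AE x in lborel. (1 + \<bar>x\<bar>) ^ 0 * exp (- Re \<alpha> * x\<^sup>2) * G =
      (\<integral>s. norm ((\<lambda>(x, s). complex_of_real \<bar>x\<bar> * gauss_weight \<alpha> \<beta> x (x * s)) (x, s)) \<partial>lborel)"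
    using AE_lborel_singleton[of 0]
  proof eventually_elim
    case (elim x)
    have "G = \<bar>x\<bar> *\<^sub>R (\<integral>s. exp (- Re \<beta> * (0 + x * s)\<^sup>2) \<partial>lborel)"
      unfolding G_def by (rule lborel_integral_real_affine[OF elim])
    moreover have "norm (complex_of_real \<bar>x\<bar> * gauss_weight \<alpha> \<beta> x (x * s))
                     = exp (- Re \<alpha> * x\<^sup>2) * (\<bar>x\<bar> * exp (- Re \<beta> * (0 + x * s)\<^sup>2))" for s
      unfolding gauss_weight_def norm_mult norm_exp_gaussian by (simp add: power_mult_distrib)
    ultimately show ?case by simp
  qed
  show "integrable lborel (\<lambda>x. \<integral>s. norm ((\<lambda>(x, s). complex_of_real \<bar>x\<bar> * gauss_weight \<alpha> \<beta> x (x * s)) (x, s)) \<partial>lborel)"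
    by (rule integrable_cong_AE_imp[OF int _ ae]) measurable
qed (rule borel_measurable_gauss_weight_along_lines)

text \<open>Substituting \<open>y = x s\<close> and swapping the order of integration turns the two-dimensional
  Gaussian into \<open>\<integral> ds / (\<alpha> + \<beta> s\<^sup>2)\<close>, which avoids the complex one-dimensional Gaussian integral.\<close>

lemma gauss_integral_one: "gauss_integral \<alpha> \<beta> (\<lambda>x y. 1) = of_real pi / (csqrt \<alpha> * csqrt \<beta>)"
proof -
  let ?K = "\<lambda>x s. complex_of_real \<bar>x\<bar> * gauss_weight \<alpha> \<beta> x (x * s)"
  have "gauss_integral \<alpha> \<beta> (\<lambda>x y. 1) = (\<integral>x. (\<integral>y. gauss_weight \<alpha> \<beta> x y \<partial>lborel) \<partial>lborel)"
    using gauss_integral_iterated[OF Re_pos poly_growth_const] by simp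
  also have "\<dots> = (\<integral>x. (\<integral>s. ?K x s \<partial>lborel) \<partial>lborel)"
    by (rule integral_cong_AE; (measurable)?)
       (use AE_lborel_singleton[of 0] integral_gauss_weight_substitute in \<open>auto elim: AE_mp\<close>)
  also have "\<dots> = (\<integral>s. (\<integral>x. ?K x s \<partial>lborel) \<partial>lborel)"
    by (rule lborel_pair.Fubini_integral[symmetric]) (use integrable_gauss_weight_along_lines in simp)
  also have "\<dots> = (\<integral>s. 1 / (\<alpha> + \<beta> * (complex_of_real s)\<^sup>2) \<partial>lborel)"
    unfolding integral_gauss_weight_along_lines ..
  also have "\<dots> = of_real pi / (csqrt \<alpha> * csqrt \<beta>)"
  proof (rule integral_inverse_quadratic[OF Re_pos])
    show "integrable lborel (\<lambda>s. 1 / (\<alpha> + \<beta> * (complex_of_real s)\<^sup>2))"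
      using lborel_pair.integrable_snd[OF integrable_gauss_weight_along_lines]
      unfolding integral_gauss_weight_along_lines .
  qed
  finally show ?thesis .
qed

end

definition hermite_product :: "complex \<Rightarrow> nat \<Rightarrow> nat \<Rightarrow> real \<Rightarrow> real \<Rightarrow> complex" where
  "hermite_product c l k x y =
     hermite l (c * complex_of_real x + (\<i> * c) * complex_of_real y) *
     hermite k (c * complex_of_real x + (- \<i> * c) * complex_of_real y)"

definition hermite_moment :: "complex \<Rightarrow> complex \<Rightarrow> complex \<Rightarrow> nat \<Rightarrow> nat \<Rightarrow> complex" where
  "hermite_moment a b c l k = gauss_integral (a - b) (a + b) (hermite_product c l k)"

lemma poly_growth_hermite_product: "poly_growth (hermite_product c l k)"
  unfolding hermite_product_def by (intro poly_growth_mult poly_growth_hermite)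

lemma hermite_product_reflect: "hermite_product c l k x (- y) = hermite_product c k l x y"
  unfolding hermite_product_def by (simp add: mult.commute)

lemma hermite_product_0_0 [simp]: "hermite_product c 0 0 = (\<lambda>x y. 1)"
  by (simp add: hermite_product_def fun_eq_iff)

lemma hermite_product_Suc_left:
  "hermite_product c (Suc l) k x y =
     2 * c * (complex_of_real x * hermite_product c l k x y)
     + 2 * (\<i> * c) * (complex_of_real y * hermite_product c l k x y)
     - 2 * of_nat l * hermite_product c (l - 1) k x y"
  unfolding hermite_product_def hermite_Suc[of l] by (simp add: algebra_simps)

lemma has_vector_derivative_hermite_product_fst:
  "((\<lambda>x. hermite_product c l k x y) has_vector_derivative
     2 * of_nat l * c * hermite_product c (l - 1) k x y + 2 * of_nat k * c * hermite_product c l (k - 1) x y) (at x)"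
proof -
  have "((\<lambda>w. hermite l (c * w + (\<i> * c) * complex_of_real y) * hermite k (c * w + (- \<i> * c) * complex_of_real y))
    has_field_derivative 2 * of_nat l * c * hermite_product c (l - 1) k x y + 2 * of_nat k * c * hermite_product c l (k - 1) x y)
    (at (complex_of_real x))"
    unfolding hermite_product_def by (auto intro!: derivative_eq_intros simp: algebra_simps)
  from has_vector_derivative_real_field[OF this] show ?thesis unfolding hermite_product_def .
qed

lemma has_vector_derivative_hermite_product_snd:
  "((\<lambda>y. hermite_product c l k x y) has_vector_derivative
     2 * of_nat l * (\<i> * c) * hermite_product c (l - 1) k x y - 2 * of_nat k * (\<i> * c) * hermite_product c l (k - 1) x y) (at y)"
proof -
  have "((\<lambda>w. hermite l (c * complex_of_real x + (\<i> * c) * w) * hermite k (c * complex_of_real x + (- \<i> * c) * w))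
    has_field_derivative 2 * of_nat l * (\<i> * c) * hermite_product c (l - 1) k x y - 2 * of_nat k * (\<i> * c) * hermite_product c l (k - 1) x y)
    (at (complex_of_real y))"
    unfolding hermite_product_def by (auto intro!: derivative_eq_intros simp: algebra_simps)
  from has_vector_derivative_real_field[OF this] show ?thesis unfolding hermite_product_def .
qed

context
  fixes a b c :: complex
  assumes Re_pos: "Re (a - b) > 0" "Re (a + b) > 0" and b: "b \<noteq> 0"
    and c: "c\<^sup>2 = (a\<^sup>2 - b\<^sup>2) / (2 * b)"
begin

lemma hermite_moment_swap: "hermite_moment a b c l k = hermite_moment a b c k l"
  unfolding hermite_moment_def
  using gauss_integral_reflect[OF Re_pos poly_growth_hermite_product, of c k l]
  by (simp add: hermite_product_reflect)

lemma hermite_moment_times_fst: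
  "(a - b) * gauss_integral (a - b) (a + b) (\<lambda>x y. complex_of_real x * hermite_product c l k x y)
     = c * (of_nat l * hermite_moment a b c (l - 1) k + of_nat k * hermite_moment a b c l (k - 1))"
proof -
  have "2 * (a - b) * gauss_integral (a - b) (a + b) (\<lambda>x y. complex_of_real x * hermite_product c l k x y)
      = gauss_integral (a - b) (a + b) (\<lambda>x y. 2 * of_nat l * c * hermite_product c (l - 1) k x y
                                             + 2 * of_nat k * c * hermite_product c l (k - 1) x y)"
    by (rule gauss_integral_by_parts_fst[OF Re_pos poly_growth_hermite_product _
          has_vector_derivative_hermite_product_fst, symmetric])
       (intro poly_growth_add poly_growth_cmult poly_growth_hermite_product)
  also have "\<dots> = 2 * of_nat l * c * hermite_moment a b c (l - 1) k + 2 * of_nat k * c * hermite_moment a b c l (k - 1)"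
    unfolding hermite_moment_def
    by (subst gauss_integral_add[OF Re_pos])
       (auto intro: poly_growth_cmult poly_growth_hermite_product simp: gauss_integral_cmult)
  finally have "2 * ((a - b) * gauss_integral (a - b) (a + b) (\<lambda>x y. complex_of_real x * hermite_product c l k x y))
     = 2 * (c * (of_nat l * hermite_moment a b c (l - 1) k + of_nat k * hermite_moment a b c l (k - 1)))"
    by (simp add: algebra_simps)
  then show ?thesis by simp
qed

lemma hermite_moment_times_snd:
  "(a + b) * gauss_integral (a - b) (a + b) (\<lambda>x y. complex_of_real y * hermite_product c l k x y)
     = \<i> * c * (of_nat l * hermite_moment a b c (l - 1) k - of_nat k * hermite_moment a b c l (k - 1))"
proof -
  have "2 * (a + b) * gauss_integral (a - b) (a + b) (\<lambda>x y. complex_of_real y * hermite_product c l k x y)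
      = gauss_integral (a - b) (a + b) (\<lambda>x y. 2 * of_nat l * (\<i> * c) * hermite_product c (l - 1) k x y
                                             - 2 * of_nat k * (\<i> * c) * hermite_product c l (k - 1) x y)"
    by (rule gauss_integral_by_parts_snd[OF Re_pos poly_growth_hermite_product _
          has_vector_derivative_hermite_product_snd, symmetric])
       (intro poly_growth_diff poly_growth_cmult poly_growth_hermite_product)
  also have "\<dots> = 2 * of_nat l * (\<i> * c) * hermite_moment a b c (l - 1) k - 2 * of_nat k * (\<i> * c) * hermite_moment a b c l (k - 1)"
    unfolding hermite_moment_def
    by (subst gauss_integral_diff[OF Re_pos])
       (auto intro: poly_growth_cmult poly_growth_hermite_product simp: gauss_integral_cmult)
  finally have "2 * ((a + b) * gauss_integral (a - b) (a + b) (\<lambda>x y. complex_of_real y * hermite_product c l k x y))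
     = 2 * (\<i> * c * (of_nat l * hermite_moment a b c (l - 1) k - of_nat k * hermite_moment a b c l (k - 1)))"
    by (simp add: algebra_simps)
  then show ?thesis by simp
qed

text \<open>Combining the recurrence with both integrations by parts, the terms in
  \<open>hermite_moment a b c (l - 1) k\<close> cancel exactly because \<open>2 b c\<^sup>2 = (a - b) (a + b)\<close>.\<close>

lemma hermite_moment_Suc_left:
  "hermite_moment a b c (Suc l) k = 2 * a / b * of_nat k * hermite_moment a b c l (k - 1)"
proof -
  define X where "X = gauss_integral (a - b) (a + b) (\<lambda>x y. complex_of_real x * hermite_product c l k x y)"
  define Y where "Y = gauss_integral (a - b) (a + b) (\<lambda>x y. complex_of_real y * hermite_product c l k x y)"
  define A where "A = hermite_moment a b c (l - 1) k"
  define B where "B = hermite_moment a b c l (k - 1)"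
  have ab: "a - b \<noteq> 0" "a + b \<noteq> 0" using Re_pos by (auto simp: complex_eq_iff)
  have "hermite_moment a b c (Suc l) k = 2 * c * X + 2 * (\<i> * c) * Y - 2 * of_nat l * A"
    unfolding hermite_moment_def hermite_product_Suc_left X_def Y_def A_def
    by (subst gauss_integral_diff[OF Re_pos], (intro poly_growth_add poly_growth_cmult poly_growth_mult
          poly_growth_fst poly_growth_snd poly_growth_hermite_product)+,
        subst gauss_integral_add[OF Re_pos], (intro poly_growth_cmult poly_growth_mult
          poly_growth_fst poly_growth_snd poly_growth_hermite_product)+)
       (simp add: gauss_integral_cmult hermite_moment_def)
  also have "\<dots> = 2 * a / b * of_nat k * B"
  proof -
    define S T where "S = of_nat l * A + of_nat k * B" and "T = of_nat l * A - of_nat k * B"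
    have c': "2 * (c * c) = (a - b) * (a + b) / b"
      using c b by (simp add: power2_eq_square field_simps)
    have "(a - b) * (2 * c * X) = 2 * c * ((a - b) * X)"
      by (simp only: mult_ac)
    also have "\<dots> = 2 * (c * c) * S"
      unfolding X_def S_def A_def B_def hermite_moment_times_fst by (simp only: mult_ac)
    also have "\<dots> = (a - b) * ((a + b) * S / b)"
      unfolding c' by simp
    finally have X: "2 * c * X = (a + b) * S / b"
      by (simp only: mult_left_cancel[OF ab(1)])
    have "(a + b) * (2 * (\<i> * c) * Y) = 2 * (\<i> * c) * ((a + b) * Y)"
      by (simp only: mult_ac)
    also have "\<dots> = - 2 * (c * c) * T"
      unfolding Y_def T_def A_def B_def hermite_moment_times_snd by (simp add: mult_ac)
    also have "\<dots> = (a + b) * (- (a - b) * T / b)"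
      unfolding mult_minus_left c' by simp
    finally have Y: "2 * (\<i> * c) * Y = - (a - b) * T / b"
      by (simp only: mult_left_cancel[OF ab(2)])
    show ?thesis
      unfolding X Y S_def T_def using b by (simp add: field_simps)
  qed
  finally show ?thesis unfolding B_def .
qed

lemma hermite_moment_0_0: "hermite_moment a b c 0 0 = of_real pi / csqrt (a\<^sup>2 - b\<^sup>2)"
proof -
  have "(a - b) * (a + b) = a\<^sup>2 - b\<^sup>2" by (simp add: power2_eq_square algebra_simps)
  then show ?thesis
    unfolding hermite_moment_def using gauss_integral_one[OF Re_pos] csqrt_mult_Re_pos[OF Re_pos] by simp
qed

lemma hermite_moment_eq:
  "hermite_moment a b c l k = (if l = k then of_nat (fact k) * (2 * a / b) ^ k * hermite_moment a b c 0 0 else 0)"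
proof (induction l arbitrary: k)
  case 0
  show ?case
  proof (cases k)
    case (Suc n)
    then show ?thesis
      using hermite_moment_swap[of 0 k] hermite_moment_Suc_left[of n 0] by simp
  qed simp
next
  case (Suc l)
  then show ?case by (cases k) (simp_all add: hermite_moment_Suc_left algebra_simps)
qed

end

lemma measurable_Complex_lborel:
  "(\<lambda>(x, y). Complex x y) \<in> measurable (lborel \<Otimes>\<^sub>M lborel) borel"
proof -
  have "continuous_on UNIV (\<lambda>p::real \<times> real. Complex (fst p) (snd p))"
    unfolding Complex_eq by (intro continuous_intros)
  then show ?thesis
    unfolding lborel_prod case_prod_beta' by (rule borel_measurable_lborel_continuous)
qed

lemma distr_Complex_lborel:
  "distr (lborel \<Otimes>\<^sub>M lborel) borel (\<lambda>(x, y). Complex x y) = (lborel :: complex measure)"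
proof (rule lborel_eqI[symmetric])
  fix l u :: complex
  assume le: "\<And>b. b \<in> Basis \<Longrightarrow> l \<bullet> b \<le> u \<bullet> b"
  have "Re l \<le> Re u" "Im l \<le> Im u" using le[of 1] le[of \<i>] by (auto simp: Basis_complex_def)
  moreover have "(\<lambda>(x, y). Complex x y) -` box l u = box (Re l, Im l) (Re u, Im u)"
    by (auto simp: box_def Basis_complex_def Basis_prod_def ball_Un)
  ultimately show "emeasure (distr (lborel \<Otimes>\<^sub>M lborel) borel (\<lambda>(x, y). Complex x y)) (box l u) = (\<Prod>b\<in>Basis. (u - l) \<bullet> b)"
    by (subst emeasure_distr[OF measurable_Complex_lborel])
       (auto simp: lborel_prod emeasure_lborel_box_eq Basis_prod_def Basis_complex_def ball_Un prod.union_disjoint)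
qed simp

lemma has_integral_complex_plane:
  fixes F :: "complex \<Rightarrow> complex"
  assumes meas: "F \<in> borel_measurable borel"
    and int: "integrable (lborel \<Otimes>\<^sub>M lborel) (\<lambda>(x, y). F (Complex x y))"
  shows "(F has_integral (\<integral>(x, y). F (Complex x y) \<partial>(lborel \<Otimes>\<^sub>M lborel))) UNIV"
proof -
  have "integrable lborel F"
    using int unfolding distr_Complex_lborel[symmetric] integrable_distr_eq[OF measurable_Complex_lborel meas]
    by (simp add: case_prod_beta')
  moreover have "integral\<^sup>L lborel F = (\<integral>(x, y). F (Complex x y) \<partial>(lborel \<Otimes>\<^sub>M lborel))"
    unfolding distr_Complex_lborel[symmetric] integral_distr[OF measurable_Complex_lborel meas]
    by (simp add: case_prod_beta')
  ultimately show ?thesis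
    using has_integral_integral_lborel by metis
qed

lemma W_Complex: "W a b (Complex x y) = gauss_weight (a - of_real b) (a + of_real b) x y"
proof -
  have norm: "complex_of_real ((cmod (Complex x y))\<^sup>2) = (complex_of_real x)\<^sup>2 + (complex_of_real y)\<^sup>2"
    by (simp add: cmod_power2)
  have squares: "(Complex x y)\<^sup>2 + (cnj (Complex x y))\<^sup>2 = 2 * (complex_of_real x)\<^sup>2 - 2 * (complex_of_real y)\<^sup>2"
    by (simp add: Complex_eq power2_eq_square algebra_simps)
  have "- a * complex_of_real ((cmod (Complex x y))\<^sup>2) + complex_of_real b / 2 * ((Complex x y)\<^sup>2 + (cnj (Complex x y))\<^sup>2)
      = - ((a - of_real b) * (complex_of_real x)\<^sup>2) + - ((a + of_real b) * (complex_of_real y)\<^sup>2)"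
    unfolding norm squares by (simp add: algebra_simps)
  then show ?thesis
    unfolding W_def gauss_weight_def by (simp only: exp_add)
qed

lemma hermite_product_Complex:
  "hermite_product c l k x y = hermite l (c * Complex x y) * hermite k (c * cnj (Complex x y))"
proof -
  have "c * Complex x y = c * complex_of_real x + (\<i> * c) * complex_of_real y"
    "c * cnj (Complex x y) = c * complex_of_real x + (- \<i> * c) * complex_of_real y"
    by (simp_all add: Complex_eq algebra_simps)
  then show ?thesis unfolding hermite_product_def by simp
qed

theorem lemma3p1:
  fixes b a0 t :: real and k l :: nat
  assumes "b \<noteq> 0" and "a0 > \<bar>b\<bar>"
  defines "a \<equiv> complex_of_real a0 - \<i> * complex_of_real t"
  defines "c \<equiv> csqrt ((a\<^sup>2 - (complex_of_real b)\<^sup>2) / (2 * complex_of_real b))"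
  shows "((\<lambda>z. hermite l (c * z) * hermite k (c * cnj z) * W a b z) has_integral
           (if l = k then of_nat (fact k) * complex_of_real pi * (2 * a) ^ k
                           / (csqrt (a\<^sup>2 - (complex_of_real b)\<^sup>2) * (complex_of_real b) ^ k)
            else 0)) UNIV"
proof -
  define B where "B = complex_of_real b"
  have Re_pos: "Re (a - B) > 0" "Re (a + B) > 0"
    using assms(2) by (simp_all add: a_def B_def)
  have B: "B \<noteq> 0" using assms(1) by (simp add: B_def)
  have c: "c\<^sup>2 = (a\<^sup>2 - B\<^sup>2) / (2 * B)" by (simp add: c_def B_def)
  define F where "F = (\<lambda>z. hermite l (c * z) * hermite k (c * cnj z) * W a b z)"
  have F_Complex: "F (Complex x y) = hermite_product c l k x y * gauss_weight (a - B) (a + B) x y" for x y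
    unfolding F_def hermite_product_Complex W_Complex B_def by simp
  have "F \<in> borel_measurable borel"
    unfolding F_def W_def by (intro borel_measurable_continuous_onI continuous_intros)
  moreover have "integrable (lborel \<Otimes>\<^sub>M lborel) (\<lambda>(x, y). F (Complex x y))"
    unfolding F_Complex by (rule integrable_gauss_weighted[OF Re_pos poly_growth_hermite_product])
  ultimately have integral: "(F has_integral hermite_moment a B c l k) UNIV"
    unfolding hermite_moment_def gauss_integral_def F_Complex[symmetric] by (rule has_integral_complex_plane)
  have closed_form: "of_nat (fact k) * (2 * a / B) ^ k * (of_real pi / csqrt (a\<^sup>2 - B\<^sup>2))
      = of_nat (fact k) * of_real pi * (2 * a) ^ k / (csqrt (a\<^sup>2 - B\<^sup>2) * B ^ k)"
    by (simp add: power_divide ac_simps)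
  from integral show ?thesis
    unfolding hermite_moment_eq[OF Re_pos B c, of l k] hermite_moment_0_0[OF Re_pos B c] closed_form unfolding F_def B_def .
qed

end
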